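(* Let $q$ be a prime power. Let $C_1=[n,k_1,d_1]_q$ and $C_2=[n,k_2,d_2]_q$ be linear codes over $\mathbb{F}_q$ with $C_2\subset C_1$ (giving, via the CSS construction, an AQECC $[[n,k,d_z/d_x]]_q$, $k=k_1-k_2$), and let $C_3=[n^{*},k_3,d_3]_q$ and $C_4=[n^{*},k_4,d_4]_q$ be linear codes over $\mathbb{F}_q$ with $C_4\subset C_3$ (giving an AQECC $[[n^{*},k^{*},d_z^{*}/d_x^{*}]]_q$, $k^{*}=k_3-k_4$). Let $d_2^{\perp}$ and $d_4^{\perp}$ be the minimum distances of the Euclidean duals $C_2^{\perp}$ and $C_4^{\perp}$. Then there exists an AQECC with parameters $[[n+n^{*}, k+k^{*}, d_z^{\diamond}/d_x^{\diamond}]]_q=[[n+n^{*},(k_1+k_3)-(k_2+k_4), d_z^{\diamond}/d_x^{\diamond}]]_q$, where $d_z^{\diamond}\geq\min\{d_1,d_3\}$ and $d_x^{\diamond}\geq\min\{d_2^{\perp},d_4^{\perp}\}$.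
   Context: An AQECC $[[n,k,d_z/d_x]]_q$ is a $q^k$-dimensional subspace of $\mathbb{C}^{q^n}$ correcting all qudit-flip errors up to $\lfloor (d_x-1)/2\rfloor$ and all phase-shift errors up to $\lfloor (d_z-1)/2\rfloor$. CSS construction: if $C_2\subset C_1\subseteq\mathbb{F}_q^n$ are linear of dimensions $k_2<k_1$, there is an AQECC $[[n,k_1-k_2,d_z/d_x]]_q$ with $d_z=\mathrm{wt}(C_1\setminus C_2)$, $d_x=\mathrm{wt}(C_2^{\perp}\setminus C_1^{\perp})$; such a code is said to be derived from $C_1,C_2$. *)

theory Defs
  imports "HOL-Analysis.Analysis"
begin

text \<open>Vectors of length n over F_q are elements of 'a^'n, with 'a a finite field
  (so q = CARD('a) is a prime power) and n = CARD('n).\<close>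

definition hamming_wt :: "'a::zero ^ 'n \<Rightarrow> nat" where
  "hamming_wt x = card {i. x $ i \<noteq> 0}"

definition wt :: "('a::zero ^ 'n) set \<Rightarrow> nat" where
  "wt S = Inf (hamming_wt ` S)"

definition min_dist :: "('a::zero ^ 'n) set \<Rightarrow> nat" where
  "min_dist C = wt (C - {0})"

definition euclid_dual :: "('a::comm_ring_1 ^ 'n::finite) set \<Rightarrow> ('a ^ 'n) set" where
  "euclid_dual C = {y. \<forall>x\<in>C. (\<Sum>i\<in>UNIV. x $ i * y $ i) = 0}"

definition css_aqecc ::
  "('a::{field,finite} ^ 'n::finite) set \<Rightarrow> ('a ^ 'n) set \<Rightarrow> nat \<Rightarrow> nat \<Rightarrow> nat \<Rightarrow> bool" where
  "css_aqecc C1 C2 k dz dx \<longleftrightarrow>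
     vec.subspace C1 \<and> vec.subspace C2 \<and> C2 \<subset> C1 \<and>
     k = vec.dim C1 - vec.dim C2 \<and>
     dz = wt (C1 - C2) \<and> dx = wt (euclid_dual C2 - euclid_dual C1)"

end

theory Submission imports Defs begin

text \<open>The combined code is the direct sum: D1 = C1 \<oplus> C3 and D2 = C2 \<oplus> C4 inside
  F_q^(n+n*). Dimensions add, and the Euclidean dual of a direct sum is the direct
  sum of the duals. A vector of D1 - D2 (resp. of the dual difference) has a
  left part outside C2 or a right part outside C4. That part is a nonzero codeword
  of C1 or C3 (resp. of C2^perp or C4^perp), and its weight is at most the weight of
  the whole vector.\<close>

definition vec_inl :: "'a::zero ^ 'n::finite \<Rightarrow> 'a ^ ('n + 'm::finite)" where
  "vec_inl x = (\<chi> k. case k of Inl i \<Rightarrow> x $ i | Inr j \<Rightarrow> 0)"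

definition vec_inr :: "'a::zero ^ 'm::finite \<Rightarrow> 'a ^ ('n::finite + 'm)" where
  "vec_inr y = (\<chi> k. case k of Inl i \<Rightarrow> 0 | Inr j \<Rightarrow> y $ j)"

definition vec_left :: "'a ^ ('n::finite + 'm::finite) \<Rightarrow> 'a ^ 'n" where
  "vec_left v = (\<chi> i. v $ Inl i)"

definition vec_right :: "'a ^ ('n::finite + 'm::finite) \<Rightarrow> 'a ^ 'm" where
  "vec_right v = (\<chi> j. v $ Inr j)"

definition code_prod :: "('a ^ 'n::finite) set \<Rightarrow> ('a ^ 'm::finite) set \<Rightarrow> ('a ^ ('n + 'm)) set" where
  "code_prod A B = {v. vec_left v \<in> A \<and> vec_right v \<in> B}"

lemma vec_inl_nth [simp]: "vec_inl x $ Inl i = x $ i" "vec_inl x $ Inr j = 0"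
  by (simp_all add: vec_inl_def)

lemma vec_inr_nth [simp]: "vec_inr y $ Inl i = 0" "vec_inr y $ Inr j = y $ j"
  by (simp_all add: vec_inr_def)

lemma vec_left_nth [simp]: "vec_left v $ i = v $ Inl i"
  by (simp add: vec_left_def)

lemma vec_right_nth [simp]: "vec_right v $ j = v $ Inr j"
  by (simp add: vec_right_def)

lemma vec_left_inl_plus_inr [simp]:
  "vec_left (vec_inl x + vec_inr y) = (x :: 'a::comm_monoid_add ^ 'n::finite)"
  by (simp add: vec_eq_iff)

lemma vec_right_inl_plus_inr [simp]:
  "vec_right (vec_inl x + vec_inr y) = (y :: 'a::comm_monoid_add ^ 'm::finite)"
  by (simp add: vec_eq_iff)

lemma vec_inl_left_plus_inr_right:
  "vec_inl (vec_left v) + vec_inr (vec_right v) = (v :: 'a::comm_monoid_add ^ ('n::finite + 'm::finite))"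
  unfolding vec_eq_iff
proof
  fix k show "(vec_inl (vec_left v) + vec_inr (vec_right v)) $ k = v $ k"
    by (cases k) simp_all
qed

lemma linear_vec_inl: "Vector_Spaces.linear (*s) (*s) (vec_inl :: 'a::field ^ 'n::finite \<Rightarrow> 'a ^ ('n + 'm::finite))"
  unfolding Vector_Spaces.linear_iff
  by (auto simp: vec.vector_space_axioms vec_eq_iff vec_inl_def split: sum.splits)

lemma linear_vec_inr: "Vector_Spaces.linear (*s) (*s) (vec_inr :: 'a::field ^ 'm::finite \<Rightarrow> 'a ^ ('n::finite + 'm))"
  unfolding Vector_Spaces.linear_iff
  by (auto simp: vec.vector_space_axioms vec_eq_iff vec_inr_def split: sum.splits)

lemma inj_vec_inl: "inj vec_inl"
  unfolding inj_on_def vec_eq_iff by (metis vec_inl_nth(1))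

lemma inj_vec_inr: "inj vec_inr"
  unfolding inj_on_def vec_eq_iff by (metis vec_inr_nth(2))

lemma hamming_wt_vec_left_le: "hamming_wt (vec_left v) \<le> hamming_wt (v :: 'a::zero ^ ('n::finite + 'm::finite))"
  unfolding hamming_wt_def by (rule card_inj_on_le[of Inl]) auto

lemma hamming_wt_vec_right_le: "hamming_wt (vec_right v) \<le> hamming_wt (v :: 'a::zero ^ ('n::finite + 'm::finite))"
  unfolding hamming_wt_def by (rule card_inj_on_le[of Inr]) auto

lemma sum_UNIV_Plus:
  "(\<Sum>k\<in>(UNIV :: ('n::finite + 'm::finite) set). f k) = (\<Sum>i\<in>UNIV. f (Inl i)) + (\<Sum>j\<in>UNIV. f (Inr j))"
  using sum.Plus[of "UNIV :: 'n set" "UNIV :: 'm set" f] by (simp add: comp_def)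

lemma code_prod_eq_sums:
  "code_prod A B = {a + b |a b. a \<in> vec_inl ` A \<and> b \<in> vec_inr ` (B :: ('a::comm_monoid_add ^ 'm::finite) set)}"
proof (intro equalityI subsetI)
  fix v assume "v \<in> code_prod A B"
  then show "v \<in> {a + b |a b. a \<in> vec_inl ` A \<and> b \<in> vec_inr ` B}"
    unfolding code_prod_def using vec_inl_left_plus_inr_right[of v, symmetric] by blast
qed (auto simp: code_prod_def)

lemma vec_inl_image_Int_vec_inr_image: "vec_inl ` A \<inter> vec_inr ` B \<subseteq> {0}"
proof
  fix v assume "v \<in> vec_inl ` A \<inter> vec_inr ` B"
  then obtain a b where ab: "v = vec_inl a" "v = vec_inr b" by blast
  have "v $ k = 0" for k
  proof (cases k)
    case Inl then show ?thesis using ab(2) by simp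
  next
    case Inr then show ?thesis using ab(1) by simp
  qed
  then show "v \<in> {0}" by (simp add: vec_eq_iff)
qed

lemma
  fixes A :: "('a::field ^ 'n::finite) set" and B :: "('a ^ 'm::finite) set"
  assumes "vec.subspace A" "vec.subspace B"
  shows subspace_code_prod: "vec.subspace (code_prod A B :: ('a ^ ('n + 'm)) set)"
    and dim_code_prod: "vec.dim (code_prod A B :: ('a ^ ('n + 'm)) set) = vec.dim A + vec.dim B"
proof -
  have sA: "vec.subspace (vec_inl ` A :: ('a ^ ('n + 'm)) set)"
    using vec.linear_subspace_image[OF linear_vec_inl assms(1)] .
  have sB: "vec.subspace (vec_inr ` B :: ('a ^ ('n + 'm)) set)"
    using vec.linear_subspace_image[OF linear_vec_inr assms(2)] .
  have "vec.dim (vec_inl ` A :: ('a ^ ('n + 'm)) set) = vec.dim A"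
    by (rule vec.dim_image_eq[OF linear_vec_inl]) (meson inj_vec_inl inj_on_subset subset_UNIV)
  moreover have "vec.dim (vec_inr ` B :: ('a ^ ('n + 'm)) set) = vec.dim B"
    by (rule vec.dim_image_eq[OF linear_vec_inr]) (meson inj_vec_inr inj_on_subset subset_UNIV)
  moreover have "vec.dim (vec_inl ` A \<inter> vec_inr ` B :: ('a ^ ('n + 'm)) set) = 0"
    using vec_inl_image_Int_vec_inr_image by (simp only: vec.dim_eq_0)
  ultimately show "vec.dim (code_prod A B :: ('a ^ ('n + 'm)) set) = vec.dim A + vec.dim B"
    unfolding code_prod_eq_sums using vec.dim_sums_Int[OF sA sB] by linarith
  show "vec.subspace (code_prod A B :: ('a ^ ('n + 'm)) set)"
    unfolding code_prod_eq_sums by (rule vec.subspace_sums[OF sA sB])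
qed

lemma euclid_dual_code_prod:
  fixes A :: "('a::comm_ring_1 ^ 'n::finite) set" and B :: "('a ^ 'm::finite) set"
  assumes "0 \<in> A" "0 \<in> B"
  shows "euclid_dual (code_prod A B) = code_prod (euclid_dual A) (euclid_dual B)"
proof (intro equalityI subsetI)
  fix y assume y: "y \<in> euclid_dual (code_prod A B)"
  have "(\<Sum>i\<in>UNIV. x $ i * vec_left y $ i) = 0" if "x \<in> A" for x
  proof -
    have "vec_inl x + vec_inr 0 \<in> code_prod A B" using that assms(2) by (simp add: code_prod_def)
    then have "(\<Sum>k\<in>UNIV. (vec_inl x + vec_inr 0) $ k * y $ k) = 0"
      using y unfolding euclid_dual_def by blast
    then show ?thesis by (simp add: sum_UNIV_Plus)
  qed
  moreover have "(\<Sum>j\<in>UNIV. x $ j * vec_right y $ j) = 0" if "x \<in> B" for x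
  proof -
    have "vec_inl 0 + vec_inr x \<in> code_prod A B" using that assms(1) by (simp add: code_prod_def)
    then have "(\<Sum>k\<in>UNIV. (vec_inl 0 + vec_inr x) $ k * y $ k) = 0"
      using y unfolding euclid_dual_def by blast
    then show ?thesis by (simp add: sum_UNIV_Plus)
  qed
  ultimately show "y \<in> code_prod (euclid_dual A) (euclid_dual B)"
    by (simp add: code_prod_def euclid_dual_def)
next
  fix y assume y: "y \<in> code_prod (euclid_dual A) (euclid_dual B)"
  show "y \<in> euclid_dual (code_prod A B)"
    unfolding euclid_dual_def
  proof safe
    fix v assume "v \<in> code_prod A B"
    then have "(\<Sum>i\<in>UNIV. vec_left v $ i * vec_left y $ i) = 0"
      "(\<Sum>j\<in>UNIV. vec_right v $ j * vec_right y $ j) = 0"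
      using y unfolding code_prod_def euclid_dual_def by blast+
    then show "(\<Sum>k\<in>UNIV. v $ k * y $ k) = 0"
      by (simp add: sum_UNIV_Plus)
  qed
qed

lemma code_prod_psubset:
  assumes "A' \<subset> A" "B' \<subseteq> B" "(0 :: 'a::comm_monoid_add ^ 'm::finite) \<in> B"
  shows "code_prod A' B' \<subset> (code_prod A B :: ('a ^ ('n::finite + 'm)) set)"
proof -
  obtain x where "x \<in> A" "x \<notin> A'" using assms(1) by blast
  then have "vec_inl x + vec_inr 0 \<in> code_prod A B - code_prod A' B'"
    using assms(3) by (simp add: code_prod_def)
  moreover have "code_prod A' B' \<subseteq> code_prod A B"
    using assms(1,2) by (auto simp: code_prod_def)
  ultimately show ?thesis by blast
qed

lemma min_dist_le_hamming_wt: "x \<in> C \<Longrightarrow> x \<noteq> 0 \<Longrightarrow> min_dist C \<le> hamming_wt x"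
  unfolding min_dist_def wt_def by (rule cInf_lower) auto

text \<open>Nonemptiness matters: wt {} = Inf {} = 0.\<close>
lemma min_dist_le_wt_code_prod_diff:
  assumes "0 \<in> A'" "0 \<in> B'" "code_prod A' B' \<subset> code_prod A B"
  shows "min (min_dist A) (min_dist B) \<le> wt (code_prod A B - code_prod A' B')"
  unfolding wt_def
proof (rule cInf_greatest)
  show "hamming_wt ` (code_prod A B - code_prod A' B') \<noteq> {}" using assms(3) by blast
next
  fix w assume "w \<in> hamming_wt ` (code_prod A B - code_prod A' B')"
  then obtain v where v: "v \<in> code_prod A B" "v \<notin> code_prod A' B'" and w: "w = hamming_wt v"
    by blast
  show "min (min_dist A) (min_dist B) \<le> w"
  proof (cases "vec_left v \<in> A'")
    case False
    then have "min_dist A \<le> hamming_wt (vec_left v)"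
      using v(1) assms(1) by (intro min_dist_le_hamming_wt) (auto simp: code_prod_def)
    then show ?thesis using hamming_wt_vec_left_le[of v] w by linarith
  next
    case True
    then have "min_dist B \<le> hamming_wt (vec_right v)"
      using v assms(2) by (intro min_dist_le_hamming_wt) (auto simp: code_prod_def)
    then show ?thesis using hamming_wt_vec_right_le[of v] w by linarith
  qed
qed

lemma zero_in_euclid_dual: "0 \<in> euclid_dual C"
  by (simp add: euclid_dual_def)

lemma euclid_dual_antimono: "C \<subseteq> C' \<Longrightarrow> euclid_dual C' \<subseteq> euclid_dual C"
  unfolding euclid_dual_def by blast

text \<open>A linear map sending a vector x \<notin> C to a unit vector and killing C
  gives, coordinatewise, a functional y with y \<perp> C but not y \<perp> x.\<close>
lemma euclid_dual_psubset:
  fixes C C' :: "('a::field ^ 'n::finite) set"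
  assumes "vec.subspace C" "C \<subset> C'"
  shows "euclid_dual C' \<subset> euclid_dual C"
proof -
  obtain x where x: "x \<in> C'" "x \<notin> C" using assms(2) by blast
  obtain B where B: "B \<subseteq> C" "vec.independent B" "C \<subseteq> vec.span B"
    by (rule vec.basis_exists[of C])
  have "x \<notin> vec.span B"
    using vec.span_minimal[OF B(1) assms(1)] x(2) by blast
  then have "vec.independent (insert x B)"
    using B(2) by (simp add: vec.independent_insert)
  then obtain g where g: "Vector_Spaces.linear (*s) (*s) g"
    "\<forall>v\<in>insert x B. g v = (if v = x then (axis undefined 1 :: 'a ^ 'n) else 0)"
    using vec.linear_independent_extend[of "insert x B" "\<lambda>v. if v = x then axis undefined 1 else 0"]
    by blast
  have g_C: "g c = 0" if "c \<in> C" for c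
    using vec.linear_eq_on[OF g(1) vec.linear_zero, of c B] g(2) B(1,3) x(2) that by fastforce
  define y where "y = (\<chi> j. g (axis j 1) $ undefined)"
  have dot_y: "(\<Sum>i\<in>UNIV. v $ i * y $ i) = g v $ undefined" for v
    using linear_componentwise[OF g(1), of v undefined] by (simp add: y_def)
  have "y \<in> euclid_dual C - euclid_dual C'"
    using x g(2) by (auto simp: euclid_dual_def dot_y g_C intro!: bexI[of _ x])
  then show ?thesis using euclid_dual_antimono[of C C'] assms(2) by blast
qed

theorem theorem4:
  fixes C1 C2 :: "('a::{field,finite} ^ 'n::finite) set"
    and C3 C4 :: "('a ^ 'm::finite) set"
  assumes "vec.subspace C1" and "vec.subspace C2" and "C2 \<subset> C1"
    and "vec.subspace C3" and "vec.subspace C4" and "C4 \<subset> C3"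
  shows "\<exists>(D1 :: ('a ^ ('n + 'm)) set) D2 dz dx.
           css_aqecc D1 D2
             ((vec.dim C1 + vec.dim C3) - (vec.dim C2 + vec.dim C4)) dz dx \<and>
           dz \<ge> min (min_dist C1) (min_dist C3) \<and>
           dx \<ge> min (min_dist (euclid_dual C2)) (min_dist (euclid_dual C4))"
proof -
  define D1 :: "('a ^ ('n + 'm)) set" where "D1 = code_prod C1 C3"
  define D2 :: "('a ^ ('n + 'm)) set" where "D2 = code_prod C2 C4"
  have zero: "0 \<in> C1" "0 \<in> C2" "0 \<in> C3" "0 \<in> C4"
    using assms by (simp_all add: vec.subspace_0)
  have "D2 \<subset> D1"
    unfolding D1_def D2_def using assms(3,6) zero(3) by (intro code_prod_psubset) auto
  then have css: "css_aqecc D1 D2 ((vec.dim C1 + vec.dim C3) - (vec.dim C2 + vec.dim C4))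
      (wt (D1 - D2)) (wt (euclid_dual D2 - euclid_dual D1))"
    unfolding css_aqecc_def D1_def D2_def
    using assms by (simp add: subspace_code_prod dim_code_prod)
  have dz: "min (min_dist C1) (min_dist C3) \<le> wt (D1 - D2)"
    using \<open>D2 \<subset> D1\<close> zero unfolding D1_def D2_def by (intro min_dist_le_wt_code_prod_diff)
  have "code_prod (euclid_dual C1) (euclid_dual C3) \<subset>
      (code_prod (euclid_dual C2) (euclid_dual C4) :: ('a ^ ('n + 'm)) set)"
    using euclid_dual_psubset[OF assms(2,3)] euclid_dual_antimono[of C4 C3] assms(6)
    by (intro code_prod_psubset) (auto simp: zero_in_euclid_dual)
  then have dx: "min (min_dist (euclid_dual C2)) (min_dist (euclid_dual C4))
      \<le> wt (euclid_dual D2 - euclid_dual D1)"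
    unfolding D1_def D2_def euclid_dual_code_prod[OF zero(1,3)] euclid_dual_code_prod[OF zero(2,4)]
    by (intro min_dist_le_wt_code_prod_diff) (simp_all add: zero_in_euclid_dual)
  show ?thesis using css dz dx by blast
qed

end
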